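(* Fix $\eta>0$ and assume $d\ge2$. There exists a minimizer $\lambda^*$ of $L$ such that $$4L(0)-4L(\lambda^* )+16m^2\eta\|\lambda^*\|_2^2\le G(\eta)^2,\qquad G(\eta):=24md(m+n)\Big(\sqrt\eta\,\|C\|_\infty+\frac{\log d}{\sqrt\eta}\Big).$$
   Context: Let $G=(V,E)$ be a finite undirected graph with $n=|V|$, $m=|E|$, every vertex incident to at least one edge; $N_i=\{e\in E:i\in e\}$. $\chi$ is a finite label set with $d=|\chi|\ge2$. Costs $C_i\in\mathbb{R}^\chi$, $C_e\in\mathbb{R}^{\chi^2}$; $\|C\|_\infty$ is the largest absolute entry; for $e=\{i,j\}$, $x_e=(x_i,x_j)$, $(x_e)_i=x_i$. Dual variables $\lambda=(\lambda_{e,i}(x))_{e\in E,i\in e,x\in\chi}\in\mathbb{R}^{2md}$ and $$L(\lambda)=\frac1\eta\sum_{i\in V}\log\sum_{x\in\chi}\exp\Big(-\eta C_i(x)+\eta\sum_{e\in N_i}\lambda_{e,i}(x)\Big)+\frac1\eta\sum_{e\in E}\log\sum_{x_e\in\chi^2}\exp\Big(-\eta C_e(x_e)-\eta\sum_{i\in e}\lambda_{e,i}((x_e)_i)\Big).$$ *)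

theory Defs
  imports "HOL-Analysis.Analysis"
begin

text \<open>Graph: vertex set V, edge set E of two-element subsets of V. An edge labelling x_e in chi^2 is represented as a map
  from the two endpoints of e to X (an element of PiE e (\<lambda>_. X)), so (x_e)_i = x_e i.\<close>

definition nbhd :: "'v set set \<Rightarrow> 'v \<Rightarrow> 'v set set" where
  "nbhd E i = {e \<in> E. i \<in> e}"

definition dualL ::
  "real \<Rightarrow> 'v set \<Rightarrow> 'v set set \<Rightarrow> 'x set \<Rightarrow> ('v \<Rightarrow> 'x \<Rightarrow> real)
   \<Rightarrow> ('v set \<Rightarrow> ('v \<Rightarrow> 'x) \<Rightarrow> real) \<Rightarrow> ('v set \<Rightarrow> 'v \<Rightarrow> 'x \<Rightarrow> real) \<Rightarrow> real" where
  "dualL \<eta> V E X Cv Ce lam =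
     (1 / \<eta>) * (\<Sum>i\<in>V. ln (\<Sum>x\<in>X. exp (- \<eta> * Cv i x + \<eta> * (\<Sum>e\<in>nbhd E i. lam e i x))))
   + (1 / \<eta>) * (\<Sum>e\<in>E. ln (\<Sum>xe\<in>PiE e (\<lambda>_. X).
         exp (- \<eta> * Ce e xe - \<eta> * (\<Sum>i\<in>e. lam e i (xe i)))))"

text \<open>Largest absolute entry of the costs (0 is included only to make Max well-defined
  when there are no entries; all entries are nonnegative in absolute value).\<close>
definition cost_sup ::
  "'v set \<Rightarrow> 'v set set \<Rightarrow> 'x set \<Rightarrow> ('v \<Rightarrow> 'x \<Rightarrow> real)
   \<Rightarrow> ('v set \<Rightarrow> ('v \<Rightarrow> 'x) \<Rightarrow> real) \<Rightarrow> real" where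
  "cost_sup V E X Cv Ce =
     Max (insert 0 ({\<bar>Cv i x\<bar> | i x. i \<in> V \<and> x \<in> X}
                 \<union> {\<bar>Ce e xe\<bar> | e xe. e \<in> E \<and> xe \<in> PiE e (\<lambda>_. X)}))"

definition dual_norm2_sq :: "'v set set \<Rightarrow> 'x set \<Rightarrow> ('v set \<Rightarrow> 'v \<Rightarrow> 'x \<Rightarrow> real) \<Rightarrow> real" where
  "dual_norm2_sq E X lam = (\<Sum>e\<in>E. \<Sum>i\<in>e. \<Sum>x\<in>X. (lam e i x)\<^sup>2)"

end

theory Submission
  imports Defs
begin

text \<open>Subtracting a constant from each \<open>\<lambda>\<^sub>e\<^sub>,\<^sub>i(\<cdot>)\<close> leaves \<open>L\<close> unchanged, and on duals
  normalised so that each \<open>\<lambda>\<^sub>e\<^sub>,\<^sub>i(\<cdot>)\<close> is nonnegative with minimum \<open>0\<close>, \<open>L\<close> dominates every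
  single coordinate; so \<open>L\<close> attains its minimum on a compact box. At a minimiser, optimality
  in the coordinate \<open>\<lambda>\<^sub>e\<^sub>,\<^sub>i(x)\<close> says that the Gibbs marginal of vertex \<open>i\<close> at \<open>x\<close> equals that
  of edge \<open>e\<close>. In logarithms, for fixed \<open>i\<close> and labels \<open>x, x'\<close>, this is a linear system for the
  differences \<open>\<lambda>\<^sub>f\<^sub>,\<^sub>i(x) - \<lambda>\<^sub>f\<^sub>,\<^sub>i(x')\<close> (\<open>f \<ni> i\<close>) with right-hand sides of size at most
  \<open>2\<eta>\<parallel>C\<parallel>\<^sub>\<infinity>\<close>, and solving it bounds every difference by \<open>4\<parallel>C\<parallel>\<^sub>\<infinity>\<close>. Normalising at a
  reference label yields a minimiser with \<open>|\<lambda>*| \<le> 4\<parallel>C\<parallel>\<^sub>\<infinity>\<close> and \<open>L(\<lambda>*) \<ge> -(n+m)\<parallel>C\<parallel>\<^sub>\<infinity>\<close>;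
  together with \<open>L(0) \<le> (n+m)\<parallel>C\<parallel>\<^sub>\<infinity> + (n+2m) log d / \<eta>\<close> the claim is arithmetic.\<close>

lemma ln_sum_exp_ge_member:
  assumes "finite A" "a \<in> A"
  shows "(f a :: real) \<le> ln (\<Sum>x\<in>A. exp (f x))"
proof -
  have le: "exp (f a) \<le> (\<Sum>x\<in>A. exp (f x))" using assms by (intro member_le_sum) auto
  moreover have "0 < (\<Sum>x\<in>A. exp (f x))" using le exp_gt_zero[of "f a"] by linarith
  ultimately have "ln (exp (f a)) \<le> ln (\<Sum>x\<in>A. exp (f x))" by (subst ln_le_cancel_iff) auto
  thus ?thesis by simp
qed

lemma ln_sum_exp_le:
  assumes "finite A" "A \<noteq> {}" "\<And>x. x \<in> A \<Longrightarrow> f x \<le> k"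
  shows "ln (\<Sum>x\<in>A. exp (f x)) \<le> ln (real (card A)) + (k::real)"
proof -
  have cA: "card A > 0" using assms card_gt_0_iff by blast
  have "(\<Sum>x\<in>A. exp (f x)) \<le> (\<Sum>x\<in>A. exp k)" using assms by (intro sum_mono) auto
  also have "\<dots> = real (card A) * exp k" by simp
  finally have "ln (\<Sum>x\<in>A. exp (f x)) \<le> ln (real (card A) * exp k)"
    using assms cA by (subst ln_le_cancel_iff) (auto intro!: sum_pos)
  also have "\<dots> = ln (real (card A)) + k" using cA by (simp add: ln_mult_pos)
  finally show ?thesis .
qed

lemma ln_sum_exp_add_const:
  assumes "finite A" "A \<noteq> {}"
  shows "ln (\<Sum>x\<in>A. exp (f x + k)) = ln (\<Sum>x\<in>A. exp (f x)) + (k::real)"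
proof -
  have "(\<Sum>x\<in>A. exp (f x + k)) = exp k * (\<Sum>x\<in>A. exp (f x))"
    by (simp add: exp_add sum_distrib_left mult.commute)
  moreover have "(\<Sum>x\<in>A. exp (f x)) > 0" using assms by (intro sum_pos) auto
  ultimately show ?thesis by (simp add: ln_mult_pos)
qed

lemma sum_exp_add_if:
  assumes "finite A"
  shows "(\<Sum>x\<in>A. exp (f x + (if P x then k else 0)))
       = (\<Sum>x\<in>A. exp (f x)) + (exp k - 1) * (\<Sum>x\<in>{x\<in>A. P x}. exp (f x :: real))"
proof -
  have "(\<Sum>x\<in>A. exp (f x + (if P x then k else 0)))
      = (\<Sum>x\<in>A. exp (f x) + (if P x then (exp k - 1) * exp (f x) else 0))"
    by (rule sum.cong) (auto simp: exp_add algebra_simps)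
  also have "\<dots> = (\<Sum>x\<in>A. exp (f x)) + (\<Sum>x\<in>{x\<in>A. P x}. (exp k - 1) * exp (f x))"
    by (simp add: sum.distrib sum.inter_filter[OF assms])
  finally show ?thesis by (simp add: sum_distrib_left)
qed

text \<open>This is the stationarity condition of the map \<open>t \<mapsto> ln (A + (e\<^sup>t - 1) a) + ln (B + (e\<^sup>-\<^sup>t - 1) W)\<close>
  at \<open>t = 0\<close>, proved without derivatives: with \<open>\<alpha> = a (B - W)\<close> and \<open>\<beta> = W (A - a)\<close>, the excess of
  the product over \<open>A B\<close> is \<open>(s - 1) (\<alpha> s - \<beta>) / s\<close>, which changes sign near \<open>s = 1\<close> unless \<open>\<alpha> = \<beta>\<close>.\<close>
lemma perturbed_product_ge_imp_eq:
  fixes a A W B :: real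
  assumes a: "0 < a" "a \<le> A" and w: "0 < W" "W \<le> B"
    and ge: "\<And>s. s > 0 \<Longrightarrow> A * B \<le> (A + (s - 1) * a) * (B + (1/s - 1) * W)"
  shows "a * B = W * A"
proof -
  define \<alpha> where "\<alpha> = a * (B - W)"
  define \<beta> where "\<beta> = W * (A - a)"
  have \<alpha>\<beta>: "\<alpha> \<ge> 0" "\<beta> \<ge> 0" unfolding \<alpha>_def \<beta>_def using a w by auto
  have excess: "s * ((A + (s - 1) * a) * (B + (1/s - 1) * W) - A * B) = (s - 1) * (\<alpha> * s - \<beta>)"
    if "s > 0" for s
    using that unfolding \<alpha>_def \<beta>_def by (simp add: field_simps)
  have nonneg: "(s - 1) * (\<alpha> * s - \<beta>) \<ge> 0" if "s > 0" for s
    using ge[OF that] excess[OF that] that by (metis diff_ge_0_iff_ge zero_le_mult_iff less_le_not_le)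
  have "\<alpha> = \<beta>"
  proof (rule ccontr)
    assume "\<alpha> \<noteq> \<beta>"
    then consider "\<beta> < \<alpha>" | "\<alpha> < \<beta>" by linarith
    then show False
    proof cases
      case 1
      define s where "s = (\<alpha> + \<beta>) / (2 * \<alpha>)"
      have "0 < s" "s < 1" "\<alpha> * s - \<beta> > 0" using 1 \<alpha>\<beta> unfolding s_def by (auto simp: field_simps)
      hence "(s - 1) * (\<alpha> * s - \<beta>) < 0" by (intro mult_neg_pos) auto
      thus False using nonneg[OF \<open>0 < s\<close>] by simp
    next
      case 2
      define s where "s = 2 * \<beta> / (\<alpha> + \<beta>)"
      have "0 < s" "1 < s" "\<alpha> * s - \<beta> < 0" using 2 \<alpha>\<beta> unfolding s_def by (auto simp: field_simps)
      hence "(s - 1) * (\<alpha> * s - \<beta>) < 0" by (intro mult_pos_neg) auto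
      thus False using nonneg[OF \<open>0 < s\<close>] by simp
    qed
  qed
  thus ?thesis unfolding \<alpha>_def \<beta>_def by (simp add: algebra_simps)
qed

text \<open>Summing the equations over \<open>K\<close> gives \<open>(k + 1) \<Sigma>w = \<Sigma>u + k a\<close> with \<open>k = |K|\<close>,
  hence \<open>(k + 1) w\<^sub>e = (k + 1) u\<^sub>e + a - \<Sigma>u\<close>.\<close>
lemma coupled_system_component_le:
  fixes w u :: "'a \<Rightarrow> real"
  assumes K: "finite K" "e \<in> K"
    and eq: "\<And>f. f \<in> K \<Longrightarrow> w f + (\<Sum>g\<in>K. w g) - a = u f"
    and u: "\<And>f. f \<in> K \<Longrightarrow> \<bar>u f\<bar> \<le> c" and a: "\<bar>a\<bar> \<le> c"
  shows "w e \<le> 2 * c"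
proof -
  define k where "k = real (card K)"
  define Sw where "Sw = (\<Sum>g\<in>K. w g)"
  have "(\<Sum>f\<in>K. w f + Sw - a) = (\<Sum>f\<in>K. u f)"
    using eq unfolding Sw_def by (intro sum.cong) auto
  moreover have "(\<Sum>f\<in>K. w f + Sw - a) = (k + 1) * Sw - k * a"
    unfolding k_def Sw_def by (simp add: sum.distrib sum_subtractf algebra_simps)
  ultimately have sum_eq: "(k + 1) * Sw = (\<Sum>f\<in>K. u f) + k * a" by simp
  have sum_u: "\<bar>\<Sum>f\<in>K. u f\<bar> \<le> k * c"
  proof -
    have "\<bar>\<Sum>f\<in>K. u f\<bar> \<le> (\<Sum>f\<in>K. \<bar>u f\<bar>)" by (rule sum_abs)
    also have "\<dots> \<le> (\<Sum>f\<in>K. c)" using u by (intro sum_mono) auto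
    finally show ?thesis unfolding k_def by simp
  qed
  have we: "w e = u e + a - Sw" using eq[OF K(2)] unfolding Sw_def by simp
  have "(k + 1) * w e = (k + 1) * u e + (k + 1) * a - (k + 1) * Sw"
    by (subst we) (simp add: algebra_simps)
  also have "\<dots> = (k + 1) * u e + a - (\<Sum>f\<in>K. u f)" unfolding sum_eq by (simp add: algebra_simps)
  also have "\<dots> \<le> (k + 1) * (2 * c)"
  proof -
    have "(k + 1) * u e \<le> (k + 1) * c"
      using u[OF K(2)] unfolding k_def by (intro mult_left_mono) auto
    thus ?thesis using sum_u a by (simp add: abs_le_iff algebra_simps)
  qed
  finally show ?thesis unfolding k_def
    by (smt (verit) mult_le_cancel_left_pos of_nat_0_le_iff)
qed

lemma cost_term_le:
  fixes m d N \<eta> C Q :: real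
  assumes m: "1 \<le> m" and d: "2 \<le> d" and N: "m \<le> N" and \<eta>: "0 < \<eta>"
    and Q: "Q \<le> 32 * m * d * C\<^sup>2"
  shows "16 * m\<^sup>2 * \<eta> * Q \<le> 576 * (m * d * N)\<^sup>2 * (\<eta> * C\<^sup>2)"
proof -
  have "m * d \<le> N\<^sup>2 * d\<^sup>2"
    using m d N self_le_power[of d 2] self_le_power[of N 2] by (intro mult_mono) auto
  hence "m\<^sup>2 * (m * d) \<le> m\<^sup>2 * (N\<^sup>2 * d\<^sup>2)" by (intro mult_left_mono) auto
  moreover have "0 \<le> m\<^sup>2 * (m * d)" using m d by simp
  moreover have "(m * d * N)\<^sup>2 = m\<^sup>2 * (N\<^sup>2 * d\<^sup>2)" by (simp add: power_mult_distrib)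
  ultimately have md: "512 * (m\<^sup>2 * (m * d)) \<le> 576 * (m * d * N)\<^sup>2" by linarith
  have "16 * m\<^sup>2 * \<eta> * Q \<le> 16 * m\<^sup>2 * \<eta> * (32 * m * d * C\<^sup>2)"
    using Q \<eta> by (intro mult_left_mono) auto
  also have "\<dots> = 512 * (m\<^sup>2 * (m * d)) * (\<eta> * C\<^sup>2)" by (simp add: algebra_simps)
  also have "\<dots> \<le> 576 * (m * d * N)\<^sup>2 * (\<eta> * C\<^sup>2)" using md \<eta> by (intro mult_right_mono) auto
  finally show ?thesis .
qed

lemma gap_bound_arith:
  fixes m d n C \<eta> ld P Q :: real
  assumes m: "m \<ge> 1" and d: "d \<ge> 2" and n: "n \<ge> 0" and C: "C \<ge> 0" and \<eta>: "\<eta> > 0"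
    and ld: "ld \<ge> 1/2"
    and P: "P \<le> 2 * (n + m) * C + (n + 2 * m) * ld / \<eta>"
    and Q: "Q \<le> 32 * m * d * C\<^sup>2"
  shows "4 * P + 16 * m\<^sup>2 * \<eta> * Q \<le> (24 * m * d * (m + n) * (sqrt \<eta> * C + ld / sqrt \<eta>))\<^sup>2"
proof -
  define N where "N = m + n"
  define Z where "Z = (m * d * N)\<^sup>2"
  have N: "1 \<le> N" "m \<le> N" "n + 2 * m \<le> 2 * N" unfolding N_def using m n by auto
  have "1 * 4 \<le> m\<^sup>2 * d\<^sup>2" using m d by (intro mult_mono power_mono[of 2 d 2, simplified]) auto
  hence "4 * N\<^sup>2 \<le> Z" unfolding Z_def power_mult_distrib using mult_right_mono[of _ _ "N\<^sup>2"] by simp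
  moreover have "N \<le> N\<^sup>2" using N(1) by (simp add: self_le_power)
  ultimately have Z: "4 * N \<le> Z" by linarith
  have expand: "(24 * m * d * (m + n) * (sqrt \<eta> * C + ld / sqrt \<eta>))\<^sup>2
      = 576 * Z * (\<eta> * C\<^sup>2) + 1152 * Z * (C * ld) + 576 * Z * (ld\<^sup>2 / \<eta>)"
    using \<eta> unfolding Z_def N_def by (simp add: power2_eq_square field_simps)
  have cost: "16 * m\<^sup>2 * \<eta> * Q \<le> 576 * Z * (\<eta> * C\<^sup>2)"
    unfolding Z_def by (rule cost_term_le[OF m d N(2) \<eta> Q])
  have "4 * N * (1/2) \<le> Z * ld" using Z ld N by (intro mult_mono) auto
  hence "8 * N \<le> 1152 * (Z * ld)" using N by linarith
  from mult_right_mono[OF this C]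
  have lin: "8 * N * C \<le> 1152 * Z * (C * ld)" by (simp add: algebra_simps)
  have "4 * (n + 2 * m) * ld \<le> 8 * N * ld" using N ld by (simp add: mult_right_mono)
  also have "\<dots> \<le> (576 * Z * (1/2)) * ld" using Z N ld by (intro mult_right_mono) auto
  also have "\<dots> = 576 * Z * (ld * (1/2))" by simp
  also have "\<dots> \<le> 576 * Z * ld\<^sup>2"
    using ld Z N by (intro mult_left_mono) (auto simp: power2_eq_square)
  finally have "4 * (n + 2 * m) * ld \<le> 576 * Z * ld\<^sup>2" .
  from divide_right_mono[OF this less_imp_le[OF \<eta>]]
  have log: "4 * ((n + 2 * m) * ld / \<eta>) \<le> 576 * Z * (ld\<^sup>2 / \<eta>)"
    by (simp only: times_divide_eq_right mult.assoc)
  define T where "T = (n + 2 * m) * ld / \<eta>"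
  define U where "U = ld\<^sup>2 / \<eta>"
  have "4 * P + 16 * m\<^sup>2 * \<eta> * Q \<le> 576 * Z * (\<eta> * C\<^sup>2) + 1152 * Z * (C * ld) + 576 * Z * U"
    using P cost lin log unfolding T_def[symmetric] U_def[symmetric] N_def
    by (simp add: algebra_simps)
  thus ?thesis unfolding expand U_def .
qed

lemma continuous_on_apply [continuous_intros]: "continuous_on S (\<lambda>g::'k \<Rightarrow> 'a::topological_space. g k)"
  by (rule continuous_on_subset[OF continuous_on_product_coordinates]) auto

lemma compact_PiE_UNIV:
  assumes "\<And>k. compact (S k)"
  shows "compact (PiE UNIV (S :: 'k \<Rightarrow> 'a::topological_space set))"
proof -
  have "compactin (product_topology (\<lambda>i. euclidean) UNIV) (PiE UNIV S)"
    using assms by (subst compactin_PiE) auto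
  thus ?thesis by (simp add: euclidean_product_topology)
qed

section \<open>The dual objective\<close>

locale pairwise_dual =
  fixes V :: "'v set" and E :: "'v set set" and X :: "'x set"
    and Cv :: "'v \<Rightarrow> 'x \<Rightarrow> real" and Ce :: "'v set \<Rightarrow> ('v \<Rightarrow> 'x) \<Rightarrow> real"
    and \<eta> :: real
  assumes finite_V: "finite V"
    and edges: "\<forall>e\<in>E. \<exists>i j. i \<in> V \<and> j \<in> V \<and> i \<noteq> j \<and> e = {i, j}"
    and cover: "\<forall>i\<in>V. \<exists>e\<in>E. i \<in> e"
    and finite_X: "finite X"
    and card_X: "card X \<ge> 2"
    and eta_pos: "\<eta> > 0"
begin

abbreviation "L \<equiv> dualL \<eta> V E X Cv Ce"
abbreviation "C \<equiv> cost_sup V E X Cv Ce"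

definition node_pot :: "('v set \<Rightarrow> 'v \<Rightarrow> 'x \<Rightarrow> real) \<Rightarrow> 'v \<Rightarrow> 'x \<Rightarrow> real" where
  "node_pot lam i x = - \<eta> * Cv i x + \<eta> * (\<Sum>e\<in>nbhd E i. lam e i x)"

definition edge_pot :: "('v set \<Rightarrow> 'v \<Rightarrow> 'x \<Rightarrow> real) \<Rightarrow> 'v set \<Rightarrow> ('v \<Rightarrow> 'x) \<Rightarrow> real" where
  "edge_pot lam e xe = - \<eta> * Ce e xe - \<eta> * (\<Sum>i\<in>e. lam e i (xe i))"

definition node_lse :: "('v set \<Rightarrow> 'v \<Rightarrow> 'x \<Rightarrow> real) \<Rightarrow> 'v \<Rightarrow> real" where
  "node_lse lam i = ln (\<Sum>x\<in>X. exp (node_pot lam i x))"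

definition edge_lse :: "('v set \<Rightarrow> 'v \<Rightarrow> 'x \<Rightarrow> real) \<Rightarrow> 'v set \<Rightarrow> real" where
  "edge_lse lam e = ln (\<Sum>xe\<in>PiE e (\<lambda>_. X). exp (edge_pot lam e xe))"

lemma L_eq_lse: "L lam = (1/\<eta>) * (\<Sum>i\<in>V. node_lse lam i) + (1/\<eta>) * (\<Sum>e\<in>E. edge_lse lam e)"
  unfolding dualL_def node_lse_def edge_lse_def node_pot_def edge_pot_def by simp

lemma X_nonempty: "X \<noteq> {}"
  using card_X by auto

lemma edge_props:
  assumes "e \<in> E"
  shows "finite e" "card e = 2" "e \<subseteq> V"
  using edges assms by auto

lemma finite_E: "finite E"
  using edges finite_V by (intro finite_subset[of E "Pow V"]) auto

lemma finite_labellings: "e \<in> E \<Longrightarrow> finite (PiE e (\<lambda>_. X))"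
  using edge_props finite_X by (simp add: finite_PiE)

lemma labellings_nonempty: "PiE e (\<lambda>_. X) \<noteq> {}"
  using X_nonempty by (simp add: PiE_eq_empty_iff)

lemma card_labellings: "e \<in> E \<Longrightarrow> card (PiE e (\<lambda>_. X)) = card X ^ 2"
  using edge_props by (simp add: card_PiE)

lemma node_sum_exp_pos: "(\<Sum>x\<in>X. exp (f x)) > (0::real)"
  using finite_X X_nonempty by (intro sum_pos) auto

lemma edge_sum_exp_pos: "e \<in> E \<Longrightarrow> (\<Sum>xe\<in>PiE e (\<lambda>_. X). exp (f xe)) > (0::real)"
  using finite_labellings labellings_nonempty by (intro sum_pos) auto

lemma cost_sup_bounds:
  shows "C \<ge> 0"
    and "\<And>i x. i \<in> V \<Longrightarrow> x \<in> X \<Longrightarrow> \<bar>Cv i x\<bar> \<le> C"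
    and "\<And>e xe. e \<in> E \<Longrightarrow> xe \<in> PiE e (\<lambda>_. X) \<Longrightarrow> \<bar>Ce e xe\<bar> \<le> C"
proof -
  have "{\<bar>Cv i x\<bar> | i x. i \<in> V \<and> x \<in> X} = (\<lambda>(i,x). \<bar>Cv i x\<bar>) ` (V \<times> X)" by auto
  hence fin_v: "finite {\<bar>Cv i x\<bar> | i x. i \<in> V \<and> x \<in> X}" using finite_V finite_X by simp
  have "{\<bar>Ce e xe\<bar> | e xe. e \<in> E \<and> xe \<in> PiE e (\<lambda>_. X)}
      = (\<lambda>(e,xe). \<bar>Ce e xe\<bar>) ` (SIGMA e:E. PiE e (\<lambda>_. X))" by auto
  moreover have "finite (SIGMA e:E. PiE e (\<lambda>_. X))" using finite_E finite_labellings by auto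
  ultimately have fin_e: "finite {\<bar>Ce e xe\<bar> | e xe. e \<in> E \<and> xe \<in> PiE e (\<lambda>_. X)}" by simp
  show "C \<ge> 0" "\<And>i x. i \<in> V \<Longrightarrow> x \<in> X \<Longrightarrow> \<bar>Cv i x\<bar> \<le> C"
    "\<And>e xe. e \<in> E \<Longrightarrow> xe \<in> PiE e (\<lambda>_. X) \<Longrightarrow> \<bar>Ce e xe\<bar> \<le> C"
    unfolding cost_sup_def using fin_v fin_e by (auto intro!: Max_ge)
qed

lemma scaled_Cv_le: "i \<in> V \<Longrightarrow> x \<in> X \<Longrightarrow> - \<eta> * Cv i x \<le> \<eta> * C"
  using cost_sup_bounds(2)[of i x] eta_pos mult_left_mono[of "- Cv i x" C \<eta>] by (auto simp: abs_le_iff)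

lemma scaled_Ce_le: "e \<in> E \<Longrightarrow> xe \<in> PiE e (\<lambda>_. X) \<Longrightarrow> - \<eta> * Ce e xe \<le> \<eta> * C"
  using cost_sup_bounds(3)[of e xe] eta_pos mult_left_mono[of "- Ce e xe" C \<eta>] by (auto simp: abs_le_iff)

lemma scaled_Cv_ge: "i \<in> V \<Longrightarrow> x \<in> X \<Longrightarrow> - \<eta> * C \<le> - \<eta> * Cv i x"
  using cost_sup_bounds(2)[of i x] eta_pos by (auto simp: abs_le_iff)

lemma scaled_Ce_ge: "e \<in> E \<Longrightarrow> xe \<in> PiE e (\<lambda>_. X) \<Longrightarrow> - \<eta> * C \<le> - \<eta> * Ce e xe"
  using cost_sup_bounds(3)[of e xe] eta_pos by (auto simp: abs_le_iff)

lemma sum_nbhd_swap: "(\<Sum>i\<in>V. \<Sum>e\<in>nbhd E i. f e i) = (\<Sum>e\<in>E. \<Sum>i\<in>e. f e i)"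
proof -
  have "(\<Sum>i\<in>V. \<Sum>e\<in>nbhd E i. f e i) = (\<Sum>i\<in>V. \<Sum>e\<in>{e. e \<in> E \<and> i \<in> e}. f e i)"
    by (simp add: nbhd_def)
  also have "\<dots> = (\<Sum>e\<in>E. \<Sum>i\<in>{i. i \<in> V \<and> i \<in> e}. f e i)"
    by (rule sum.swap_restrict[OF finite_V finite_E])
  also have "\<dots> = (\<Sum>e\<in>E. \<Sum>i\<in>e. f e i)"
    by (intro sum.cong refl) (use edge_props in auto)
  finally show ?thesis .
qed

lemma L_cong:
  assumes "\<And>e i x. e \<in> E \<Longrightarrow> i \<in> e \<Longrightarrow> x \<in> X \<Longrightarrow> lam1 e i x = lam2 e i x"
  shows "L lam1 = L lam2"
  unfolding dualL_def
  by (intro arg_cong2[where f="(+)"] arg_cong2[where f="(*)"] refl sum.cong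
      arg_cong[where f=ln] arg_cong[where f=exp] arg_cong2[where f="(-)"])
    (use assms in \<open>auto simp: nbhd_def PiE_iff\<close>)

text \<open>Each shift appears with opposite signs in the vertex and the edge term.\<close>
lemma L_shift_invariant: "L (\<lambda>e i x. lam e i x - c e i) = L lam"
proof -
  let ?l = "\<lambda>e i x. lam e i x - c e i"
  have node: "node_lse ?l i = node_lse lam i + (- \<eta> * (\<Sum>e\<in>nbhd E i. c e i))" for i
  proof -
    have "node_pot ?l i x = node_pot lam i x + (- \<eta> * (\<Sum>e\<in>nbhd E i. c e i))" for x
      unfolding node_pot_def by (simp add: sum_subtractf algebra_simps)
    thus ?thesis unfolding node_lse_def by (simp only:) (rule ln_sum_exp_add_const[OF finite_X X_nonempty])
  qed
  have edge: "edge_lse ?l e = edge_lse lam e + \<eta> * (\<Sum>i\<in>e. c e i)" if "e \<in> E" for e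
  proof -
    have "edge_pot ?l e xe = edge_pot lam e xe + \<eta> * (\<Sum>i\<in>e. c e i)" for xe
      unfolding edge_pot_def by (simp add: sum_subtractf algebra_simps)
    thus ?thesis unfolding edge_lse_def
      using ln_sum_exp_add_const[OF finite_labellings[OF that] labellings_nonempty] by simp
  qed
  have "L ?l = L lam + (1/\<eta>) * (- \<eta> * (\<Sum>i\<in>V. \<Sum>e\<in>nbhd E i. c e i))
      + (1/\<eta>) * (\<eta> * (\<Sum>e\<in>E. \<Sum>i\<in>e. c e i))"
    unfolding L_eq_lse using edge by (simp add: sum.distrib sum_distrib_left node algebra_simps)
  thus ?thesis unfolding sum_nbhd_swap using eta_pos by simp
qed

lemma L_zero_le:
  "L (\<lambda>_ _ _. 0) \<le> (real (card V) + real (card E)) * C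
     + (real (card V) + 2 * real (card E)) * ln (real (card X)) / \<eta>"
proof -
  have node: "node_lse (\<lambda>_ _ _. 0) i \<le> ln (real (card X)) + \<eta> * C" if "i \<in> V" for i
    unfolding node_lse_def node_pot_def
    using scaled_Cv_le[OF that] by (intro ln_sum_exp_le[OF finite_X X_nonempty]) auto
  have edge: "edge_lse (\<lambda>_ _ _. 0) e \<le> 2 * ln (real (card X)) + \<eta> * C" if "e \<in> E" for e
  proof -
    have "edge_lse (\<lambda>_ _ _. 0) e \<le> ln (real (card (PiE e (\<lambda>_. X)))) + \<eta> * C"
      unfolding edge_lse_def edge_pot_def using scaled_Ce_le[OF that]
      by (intro ln_sum_exp_le[OF finite_labellings[OF that] labellings_nonempty]) auto
    also have "ln (real (card (PiE e (\<lambda>_. X)))) = 2 * ln (real (card X))"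
      using card_labellings[OF that] card_X by (simp add: ln_realpow)
    finally show ?thesis .
  qed
  have "L (\<lambda>_ _ _. 0) \<le> (1/\<eta>) * (real (card V) * (ln (real (card X)) + \<eta> * C))
     + (1/\<eta>) * (real (card E) * (2 * ln (real (card X)) + \<eta> * C))"
    unfolding L_eq_lse using eta_pos sum_mono[OF node] sum_mono[OF edge]
    by (intro add_mono mult_left_mono) auto
  also have "\<dots> = (real (card V) + real (card E)) * C
     + (real (card V) + 2 * real (card E)) * ln (real (card X)) / \<eta>"
    using eta_pos by (simp add: field_simps)
  finally show ?thesis .
qed

lemma L_ge_of_lse_ge:
  assumes "\<And>i. i \<in> V \<Longrightarrow> a i \<le> node_lse lam i" "\<And>e. e \<in> E \<Longrightarrow> b e \<le> edge_lse lam e"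
  shows "(1/\<eta>) * (\<Sum>i\<in>V. a i) + (1/\<eta>) * (\<Sum>e\<in>E. b e) \<le> L lam"
  unfolding L_eq_lse using eta_pos assms by (intro add_mono mult_left_mono sum_mono) auto

lemma node_lse_ge_cost:
  assumes "i \<in> V" "x \<in> X" "a \<le> (\<Sum>e\<in>nbhd E i. lam e i x)"
  shows "- \<eta> * C + \<eta> * a \<le> node_lse lam i"
proof -
  have "node_pot lam i x \<le> node_lse lam i"
    unfolding node_lse_def by (rule ln_sum_exp_ge_member[OF finite_X assms(2)])
  moreover have "\<eta> * a \<le> \<eta> * (\<Sum>e\<in>nbhd E i. lam e i x)" using assms(3) eta_pos by simp
  ultimately show ?thesis using scaled_Cv_ge[OF assms(1,2)] unfolding node_pot_def by linarith
qed

lemma edge_lse_ge_cost: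
  assumes "e \<in> E" "xe \<in> PiE e (\<lambda>_. X)" "\<And>i. i \<in> e \<Longrightarrow> lam e i (xe i) = 0"
  shows "- \<eta> * C \<le> edge_lse lam e"
proof -
  have "edge_pot lam e xe \<le> edge_lse lam e"
    unfolding edge_lse_def by (rule ln_sum_exp_ge_member[OF finite_labellings[OF assms(1)] assms(2)])
  moreover have "edge_pot lam e xe = - \<eta> * Ce e xe" unfolding edge_pot_def using assms(3) by simp
  ultimately show ?thesis using scaled_Ce_ge[OF assms(1,2)] by linarith
qed

lemma L_ge_of_vanishing_label:
  assumes xr: "xr \<in> X" and zero: "\<And>e i. e \<in> E \<Longrightarrow> i \<in> e \<Longrightarrow> lam e i xr = 0"
  shows "- (real (card V) + real (card E)) * C \<le> L lam"
proof -
  have node: "- \<eta> * C \<le> node_lse lam i" if "i \<in> V" for i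
    using node_lse_ge_cost[OF that xr, of 0] zero by (simp add: nbhd_def)
  have edge: "- \<eta> * C \<le> edge_lse lam e" if "e \<in> E" for e
    using xr zero[OF that] by (intro edge_lse_ge_cost[OF that, of "restrict (\<lambda>_. xr) e"]) auto
  have "(1/\<eta>) * (\<Sum>i\<in>V. - \<eta> * C) + (1/\<eta>) * (\<Sum>e\<in>E. - \<eta> * C) \<le> L lam"
    by (rule L_ge_of_lse_ge) (use node edge in auto)
  thus ?thesis using eta_pos by (simp add: field_simps)
qed

section \<open>Existence of a minimiser\<close>

definition normalized :: "('v set \<Rightarrow> 'v \<Rightarrow> 'x \<Rightarrow> real) \<Rightarrow> bool" where
  "normalized lam \<longleftrightarrow> (\<forall>e\<in>E. \<forall>i\<in>e. (\<forall>x\<in>X. 0 \<le> lam e i x) \<and> (\<exists>x\<in>X. lam e i x = 0))"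

lemma normalized_le_L:
  assumes norm: "normalized lam" and e0: "e0 \<in> E" and i0: "i0 \<in> e0" and x0: "x0 \<in> X"
  shows "lam e0 i0 x0 \<le> L lam + (real (card V) + real (card E)) * C"
proof -
  have nonneg: "\<And>e i x. e \<in> E \<Longrightarrow> i \<in> e \<Longrightarrow> x \<in> X \<Longrightarrow> 0 \<le> lam e i x"
    using norm unfolding normalized_def by blast
  obtain xa where xa: "xa \<in> X" using X_nonempty by auto
  have i0V: "i0 \<in> V" using edge_props(3)[OF e0] i0 by auto
  have node: "- \<eta> * C + \<eta> * (if i = i0 then lam e0 i0 x0 else 0) \<le> node_lse lam i" if "i \<in> V" for i
  proof -
    define x where "x = (if i = i0 then x0 else xa)"
    have "(if i = i0 then lam e0 i0 x0 else 0) \<le> (\<Sum>e\<in>nbhd E i. lam e i x)"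
      using nonneg e0 i0 x0 xa finite_E unfolding x_def
      by (auto simp: nbhd_def intro!: member_le_sum sum_nonneg)
    thus ?thesis using x0 xa unfolding x_def by (intro node_lse_ge_cost[OF that]) auto
  qed
  have edge: "- \<eta> * C \<le> edge_lse lam e" if e: "e \<in> E" for e
  proof -
    have "\<forall>i\<in>e. \<exists>x. x \<in> X \<and> lam e i x = 0" using norm e unfolding normalized_def by blast
    then obtain xe where "\<forall>i\<in>e. xe i \<in> X \<and> lam e i (xe i) = 0" by (auto dest!: bchoice)
    thus ?thesis by (intro edge_lse_ge_cost[OF e, of "restrict xe e"]) auto
  qed
  have "(1/\<eta>) * (\<Sum>i\<in>V. - \<eta> * C + \<eta> * (if i = i0 then lam e0 i0 x0 else 0))
      + (1/\<eta>) * (\<Sum>e\<in>E. - \<eta> * C) \<le> L lam"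
    by (rule L_ge_of_lse_ge) (use node edge in auto)
  moreover have "(1/\<eta>) * (\<Sum>i\<in>V. - \<eta> * C + \<eta> * (if i = i0 then lam e0 i0 x0 else 0))
      + (1/\<eta>) * (\<Sum>e\<in>E. - \<eta> * C) = lam e0 i0 x0 - (real (card V) + real (card E)) * C"
  proof -
    have "(\<Sum>i\<in>V. - \<eta> * C + \<eta> * (if i = i0 then lam e0 i0 x0 else 0))
        = real (card V) * (- \<eta> * C) + \<eta> * lam e0 i0 x0"
      using i0V finite_V by (simp add: sum.distrib sum_subtractf sum_distrib_left[symmetric])
    thus ?thesis using eta_pos by (simp add: field_simps)
  qed
  ultimately show ?thesis by linarith
qed

lemma exists_normalized:
  "\<exists>lam'. normalized lam' \<and> L lam' = L lam
     \<and> (\<forall>e i x. \<not> (e \<in> E \<and> i \<in> e \<and> x \<in> X) \<longrightarrow> lam' e i x = 0)"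
proof -
  define c where "c = (\<lambda>e i. Min (lam e i ` X))"
  define lam' where "lam' = (\<lambda>e i x. if e \<in> E \<and> i \<in> e \<and> x \<in> X then lam e i x - c e i else 0)"
  have "L lam' = L (\<lambda>e i x. lam e i x - c e i)" by (rule L_cong) (simp add: lam'_def)
  hence "L lam' = L lam" by (simp add: L_shift_invariant)
  moreover have "normalized lam'"
    unfolding normalized_def
  proof (intro ballI)
    fix e i assume ei: "e \<in> E" "i \<in> e"
    have "c e i \<in> lam e i ` X" unfolding c_def using finite_X X_nonempty by (intro Min_in) auto
    moreover have "c e i \<le> lam e i x" if "x \<in> X" for x unfolding c_def using finite_X that by simp
    ultimately show "(\<forall>x\<in>X. 0 \<le> lam' e i x) \<and> (\<exists>x\<in>X. lam' e i x = 0)"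
      using ei unfolding lam'_def by auto
  qed
  ultimately show ?thesis unfolding lam'_def by auto
qed

lemma continuous_on_L: "continuous_on UNIV (\<lambda>g. L (\<lambda>e i x. g (e, i, x)))"
  unfolding dualL_def
  by (intro continuous_intros)
    (auto simp: node_sum_exp_pos[THEN less_imp_not_eq2] edge_sum_exp_pos[THEN less_imp_not_eq2])

text \<open>By \<open>exists_normalized\<close> and \<open>normalized_le_L\<close>, every value of \<open>L\<close> below \<open>L(0)\<close> is
  attained on the compact box \<open>K\<close>.\<close>
lemma exists_minimizer: "\<exists>lam0. \<forall>lam. L lam0 \<le> L lam"
proof -
  define D where "D = {(e, i, x). e \<in> E \<and> i \<in> e \<and> x \<in> X}"
  define B where "B = \<bar>L (\<lambda>_ _ _. 0)\<bar> + (real (card V) + real (card E)) * C"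
  define S where "S = (\<lambda>k. if k \<in> D then {0..B} else {0::real})"
  define K where "K = PiE UNIV S"
  have "compact K" unfolding K_def S_def by (rule compact_PiE_UNIV) auto
  have "0 \<le> B" unfolding B_def using cost_sup_bounds(1) by simp
  hence zero_K: "(\<lambda>_. 0) \<in> K" unfolding K_def S_def by auto
  obtain g0 where
    min: "\<And>g. g \<in> K \<Longrightarrow> L (\<lambda>e i x. g0 (e, i, x)) \<le> L (\<lambda>e i x. g (e, i, x))"
    using continuous_attains_inf[OF \<open>compact K\<close> _ continuous_on_subset[OF continuous_on_L]] zero_K
    by blast
  have "L (\<lambda>e i x. g0 (e, i, x)) \<le> L lam" for lam
  proof (cases "L (\<lambda>_ _ _. 0) \<le> L lam")
    case True
    then show ?thesis using min[OF zero_K] by simp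
  next
    case False
    obtain lam' where lam': "normalized lam'" "L lam' = L lam"
      and outside: "\<And>e i x. \<not> (e \<in> E \<and> i \<in> e \<and> x \<in> X) \<Longrightarrow> lam' e i x = 0"
      using exists_normalized by blast
    have "(\<lambda>(e, i, x). lam' e i x) k \<in> S k" for k
    proof (cases "k \<in> D")
      case True
      then obtain e i x where k: "k = (e, i, x)" "e \<in> E" "i \<in> e" "x \<in> X" unfolding D_def by auto
      have "0 \<le> lam' e i x" using lam'(1) k unfolding normalized_def by blast
      moreover have "lam' e i x \<le> B"
        using normalized_le_L[OF lam'(1) k(2-4)] lam'(2) False unfolding B_def by linarith
      ultimately show ?thesis using True k unfolding S_def by simp
    next
      case False
      then show ?thesis unfolding S_def D_def using outside by (cases k) auto
    qed
    hence "(\<lambda>(e, i, x). lam' e i x) \<in> K" unfolding K_def by auto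
    from min[OF this] show ?thesis using lam'(2) by simp
  qed
  thus ?thesis by blast
qed

section \<open>Minimisers\<close>

definition slice :: "'v set \<Rightarrow> 'v \<Rightarrow> 'x \<Rightarrow> ('v \<Rightarrow> 'x) set" where
  "slice e i x = {xe \<in> PiE e (\<lambda>_. X). xe i = x}"

lemma finite_slice: "e \<in> E \<Longrightarrow> finite (slice e i x)"
  unfolding slice_def using finite_labellings by simp

lemma slice_nonempty:
  assumes "i \<in> e" "x \<in> X"
  shows "slice e i x \<noteq> {}"
proof -
  obtain xa where "xa \<in> X" using X_nonempty by auto
  hence "(\<lambda>k\<in>e. if k = i then x else xa) \<in> slice e i x" using assms unfolding slice_def by auto
  thus ?thesis by blast
qed

definition bump :: "('e \<Rightarrow> 'v \<Rightarrow> 'x \<Rightarrow> real) \<Rightarrow> 'e \<Rightarrow> 'v \<Rightarrow> 'x \<Rightarrow> real \<Rightarrow> 'e \<Rightarrow> 'v \<Rightarrow> 'x \<Rightarrow> real" where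
  "bump lam e0 i0 x0 t = (\<lambda>e i x. lam e i x + (if e = e0 \<and> i = i0 \<and> x = x0 then t else 0))"

lemma node_pot_bump:
  assumes "e0 \<in> E" "i0 \<in> e0"
  shows "node_pot (bump lam e0 i0 x0 t) i x = node_pot lam i x + (if i = i0 \<and> x = x0 then \<eta> * t else 0)"
proof -
  have "(\<Sum>e\<in>nbhd E i. if e = e0 \<and> i = i0 \<and> x = x0 then t else 0) = (if i = i0 \<and> x = x0 then t else 0)"
    using finite_E assms by (auto simp: nbhd_def)
  thus ?thesis unfolding node_pot_def bump_def by (simp add: sum.distrib algebra_simps)
qed

lemma edge_pot_bump:
  assumes "e0 \<in> E" "i0 \<in> e0"
  shows "edge_pot (bump lam e0 i0 x0 t) e xe
       = edge_pot lam e xe + (if e = e0 \<and> xe i0 = x0 then - (\<eta> * t) else 0)"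
proof -
  have "(\<Sum>i\<in>e. if e = e0 \<and> i = i0 \<and> xe i = x0 then t else 0) = (if e = e0 \<and> xe i0 = x0 then t else 0)"
  proof (cases "e = e0")
    case True
    have "(\<Sum>i\<in>e. if e = e0 \<and> i = i0 \<and> xe i = x0 then t else 0)
        = (\<Sum>i\<in>e0. if i = i0 then (if xe i0 = x0 then t else 0) else 0)"
      by (rule sum.cong) (auto simp: True)
    thus ?thesis using True edge_props(1)[OF assms(1)] assms(2) by simp
  qed simp
  thus ?thesis unfolding edge_pot_def bump_def by (simp add: sum.distrib algebra_simps)
qed

lemma L_bump:
  fixes lam :: "'v set \<Rightarrow> 'v \<Rightarrow> 'x \<Rightarrow> real" and x0 :: 'x and t :: real
  assumes e0: "e0 \<in> E" and i0: "i0 \<in> e0"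
  defines "lam' \<equiv> bump lam e0 i0 x0 t"
  shows "L lam' = L lam + (1/\<eta>) * ((node_lse lam' i0 - node_lse lam i0) + (edge_lse lam' e0 - edge_lse lam e0))"
proof -
  have i0V: "i0 \<in> V" using edge_props(3)[OF e0] i0 by auto
  have "node_lse lam' i = node_lse lam i" if "i \<noteq> i0" for i
    unfolding node_lse_def lam'_def node_pot_bump[OF e0 i0] using that by simp
  hence "(\<Sum>i\<in>V - {i0}. node_lse lam' i) = (\<Sum>i\<in>V - {i0}. node_lse lam i)" by (intro sum.cong) auto
  hence nodes: "(\<Sum>i\<in>V. node_lse lam' i) = (\<Sum>i\<in>V. node_lse lam i) + (node_lse lam' i0 - node_lse lam i0)"
    using sum.remove[OF finite_V i0V, of "node_lse lam'"] sum.remove[OF finite_V i0V, of "node_lse lam"] by simp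
  have "edge_lse lam' e = edge_lse lam e" if "e \<noteq> e0" for e
    unfolding edge_lse_def lam'_def edge_pot_bump[OF e0 i0] using that by simp
  hence "(\<Sum>e\<in>E - {e0}. edge_lse lam' e) = (\<Sum>e\<in>E - {e0}. edge_lse lam e)" by (intro sum.cong) auto
  hence edges: "(\<Sum>e\<in>E. edge_lse lam' e) = (\<Sum>e\<in>E. edge_lse lam e) + (edge_lse lam' e0 - edge_lse lam e0)"
    using sum.remove[OF finite_E e0, of "edge_lse lam'"] sum.remove[OF finite_E e0, of "edge_lse lam"] by simp
  show ?thesis unfolding L_eq_lse nodes edges by (simp add: algebra_simps)
qed

lemma node_lse_bump:
  assumes "e0 \<in> E" "i0 \<in> e0" "x0 \<in> X"
  shows "node_lse (bump lam e0 i0 x0 t) i0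
       = ln ((\<Sum>x\<in>X. exp (node_pot lam i0 x)) + (exp (\<eta> * t) - 1) * exp (node_pot lam i0 x0))"
proof -
  have "{x \<in> X. x = x0} = {x0}" using assms(3) by auto
  thus ?thesis unfolding node_lse_def node_pot_bump[OF assms(1,2)]
    by (simp add: sum_exp_add_if[OF finite_X])
qed

lemma edge_lse_bump:
  assumes "e0 \<in> E" "i0 \<in> e0"
  shows "edge_lse (bump lam e0 i0 x0 t) e0
       = ln ((\<Sum>xe\<in>PiE e0 (\<lambda>_. X). exp (edge_pot lam e0 xe))
             + (exp (- (\<eta> * t)) - 1) * (\<Sum>xe\<in>slice e0 i0 x0. exp (edge_pot lam e0 xe)))"
  unfolding edge_lse_def edge_pot_bump[OF assms] slice_def
  by (simp add: sum_exp_add_if[OF finite_labellings[OF assms(1)]])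

text \<open>The vertex marginal of \<open>i\<^sub>0\<close> and the edge marginal of \<open>e\<^sub>0\<close> at \<open>x\<^sub>0\<close> coincide: perturb only
  the coordinate \<open>\<lambda>\<^sub>e\<^sub>0\<^sub>,\<^sub>i\<^sub>0(x\<^sub>0)\<close> by \<open>ln s / \<eta>\<close> and apply \<open>perturbed_product_ge_imp_eq\<close>.\<close>
lemma minimizer_marginals_eq:
  assumes min: "\<And>lam'. L lam \<le> L lam'" and e0: "e0 \<in> E" and i0: "i0 \<in> e0" and x0: "x0 \<in> X"
  shows "exp (node_pot lam i0 x0) * (\<Sum>xe\<in>PiE e0 (\<lambda>_. X). exp (edge_pot lam e0 xe))
       = (\<Sum>xe\<in>slice e0 i0 x0. exp (edge_pot lam e0 xe)) * (\<Sum>x\<in>X. exp (node_pot lam i0 x))"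
proof -
  let ?A = "\<Sum>x\<in>X. exp (node_pot lam i0 x)"
  let ?a = "exp (node_pot lam i0 x0)"
  let ?B = "\<Sum>xe\<in>PiE e0 (\<lambda>_. X). exp (edge_pot lam e0 xe)"
  let ?W = "\<Sum>xe\<in>slice e0 i0 x0. exp (edge_pot lam e0 xe)"
  have A_pos: "0 < ?A" by (rule node_sum_exp_pos)
  have B_pos: "0 < ?B" by (rule edge_sum_exp_pos[OF e0])
  have a: "0 < ?a" "?a \<le> ?A" using finite_X x0 by (auto intro: member_le_sum)
  have W: "0 < ?W" "?W \<le> ?B"
    using finite_slice[OF e0] slice_nonempty[OF i0 x0] finite_labellings[OF e0]
    by (auto intro!: sum_pos sum_mono2 simp: slice_def)
  have "?A * ?B \<le> (?A + (s - 1) * ?a) * (?B + (1/s - 1) * ?W)" if s: "s > 0" for s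
  proof -
    define t where "t = ln s / \<eta>"
    have st: "exp (\<eta> * t) = s" "exp (- (\<eta> * t)) = 1 / s"
      using s eta_pos unfolding t_def by (auto simp: exp_minus inverse_eq_divide)
    have pos: "0 < ?A + (s - 1) * ?a" "0 < ?B + (1/s - 1) * ?W"
    proof -
      have "0 < (?A - ?a) + s * ?a" using a s by (intro add_nonneg_pos) auto
      thus "0 < ?A + (s - 1) * ?a" by (simp add: algebra_simps)
      have "0 < (?B - ?W) + ?W / s" using W s by (intro add_nonneg_pos) auto
      thus "0 < ?B + (1/s - 1) * ?W" by (simp add: algebra_simps)
    qed
    have "L lam \<le> L (bump lam e0 i0 x0 t)" by (rule min)
    hence "node_lse lam i0 + edge_lse lam e0
        \<le> node_lse (bump lam e0 i0 x0 t) i0 + edge_lse (bump lam e0 i0 x0 t) e0"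
      unfolding L_bump[OF e0 i0] using eta_pos by (simp add: zero_le_divide_iff)
    hence "node_lse lam i0 + edge_lse lam e0 \<le> ln (?A + (s - 1) * ?a) + ln (?B + (1/s - 1) * ?W)"
      by (simp only: node_lse_bump[OF e0 i0 x0] edge_lse_bump[OF e0 i0] st)
    hence "ln (?A * ?B) \<le> ln ((?A + (s - 1) * ?a) * (?B + (1/s - 1) * ?W))"
      unfolding node_lse_def edge_lse_def using pos A_pos B_pos by (simp add: ln_mult_pos)
    moreover have "0 < ?A * ?B" using A_pos B_pos by simp
    moreover have "0 < (?A + (s - 1) * ?a) * (?B + (1/s - 1) * ?W)" using pos by simp
    ultimately show ?thesis by simp
  qed
  from perturbed_product_ge_imp_eq[OF a W this] show ?thesis .
qed

definition cavity_pot :: "('v set \<Rightarrow> 'v \<Rightarrow> 'x \<Rightarrow> real) \<Rightarrow> 'v set \<Rightarrow> 'v \<Rightarrow> ('v \<Rightarrow> 'x) \<Rightarrow> real" where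
  "cavity_pot lam e i xe = - \<eta> * Ce e xe - \<eta> * (\<Sum>k\<in>e - {i}. lam e k (xe k))"

definition cavity_sum :: "('v set \<Rightarrow> 'v \<Rightarrow> 'x \<Rightarrow> real) \<Rightarrow> 'v set \<Rightarrow> 'v \<Rightarrow> 'x \<Rightarrow> real" where
  "cavity_sum lam e i x = (\<Sum>xe\<in>slice e i x. exp (cavity_pot lam e i xe))"

lemma cavity_sum_pos: "e \<in> E \<Longrightarrow> i \<in> e \<Longrightarrow> x \<in> X \<Longrightarrow> 0 < cavity_sum lam e i x"
  unfolding cavity_sum_def using finite_slice slice_nonempty by (intro sum_pos) auto

lemma sum_slice_edge_pot:
  assumes "e \<in> E" "i \<in> e"
  shows "(\<Sum>xe\<in>slice e i x. exp (edge_pot lam e xe)) = exp (- \<eta> * lam e i x) * cavity_sum lam e i x"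
  unfolding cavity_sum_def sum_distrib_left
proof (rule sum.cong[OF refl])
  fix xe assume "xe \<in> slice e i x"
  hence xi: "xe i = x" by (simp add: slice_def)
  have "(\<Sum>k\<in>e. lam e k (xe k)) = lam e i (xe i) + (\<Sum>k\<in>e - {i}. lam e k (xe k))"
    using sum.remove[OF edge_props(1)[OF assms(1)] assms(2)] by simp
  thus "exp (edge_pot lam e xe) = exp (- \<eta> * lam e i x) * exp (cavity_pot lam e i xe)"
    unfolding edge_pot_def cavity_pot_def by (simp add: xi exp_add[symmetric] algebra_simps)
qed

text \<open>Relabelling \<open>i\<close> maps the slice at \<open>x'\<close> bijectively onto the slice at \<open>x\<close>; it changes the edge
  cost by at most \<open>2\<parallel>C\<parallel>\<^sub>\<infinity>\<close> and leaves the remaining dual terms unchanged.\<close>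
lemma ln_cavity_sum_diff_le:
  assumes e: "e \<in> E" and i: "i \<in> e" and x: "x \<in> X" and x': "x' \<in> X"
  shows "ln (cavity_sum lam e i x) - ln (cavity_sum lam e i x') \<le> 2 * \<eta> * C"
proof -
  have bij: "bij_betw (\<lambda>xe. xe(i := x)) (slice e i x') (slice e i x)"
    by (rule bij_betw_byWitness[where f'="\<lambda>xe. xe(i := x')"])
      (use i x x' in \<open>auto simp: slice_def PiE_iff extensional_def\<close>)
  have "cavity_sum lam e i x = (\<Sum>xe\<in>slice e i x'. exp (cavity_pot lam e i (xe(i := x))))"
    unfolding cavity_sum_def using sum.reindex_bij_betw[OF bij, of "\<lambda>xe. exp (cavity_pot lam e i xe)"] by simp
  also have "\<dots> \<le> (\<Sum>xe\<in>slice e i x'. exp (2 * \<eta> * C) * exp (cavity_pot lam e i xe))"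
  proof (intro sum_mono)
    fix xe assume xe: "xe \<in> slice e i x'"
    have m1: "xe \<in> PiE e (\<lambda>_. X)" using xe by (simp add: slice_def)
    have m2: "xe(i := x) \<in> PiE e (\<lambda>_. X)" using m1 i x by (auto simp: PiE_iff extensional_def)
    have other: "(\<Sum>k\<in>e - {i}. lam e k ((xe(i := x)) k)) = (\<Sum>k\<in>e - {i}. lam e k (xe k))"
      by (rule sum.cong) auto
    have "- \<eta> * Ce e (xe(i := x)) \<le> 2 * \<eta> * C + - \<eta> * Ce e xe"
      using scaled_Ce_le[OF e m2] scaled_Ce_ge[OF e m1] by linarith
    hence "cavity_pot lam e i (xe(i := x)) \<le> 2 * \<eta> * C + cavity_pot lam e i xe"
      unfolding cavity_pot_def other by linarith
    thus "exp (cavity_pot lam e i (xe(i := x))) \<le> exp (2 * \<eta> * C) * exp (cavity_pot lam e i xe)"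
      by (simp add: exp_add[symmetric])
  qed
  also have "\<dots> = exp (2 * \<eta> * C) * cavity_sum lam e i x'"
    unfolding cavity_sum_def by (simp add: sum_distrib_left)
  finally have "ln (cavity_sum lam e i x) \<le> ln (exp (2 * \<eta> * C) * cavity_sum lam e i x')"
    using cavity_sum_pos[OF e i x] cavity_sum_pos[OF e i x'] by simp
  thus ?thesis using cavity_sum_pos[OF e i x'] by (simp add: ln_mult_pos)
qed

lemma minimizer_balance:
  assumes min: "\<And>lam'. L lam \<le> L lam'" and e: "e \<in> E" and i: "i \<in> e" and x: "x \<in> X"
  shows "node_pot lam i x + \<eta> * lam e i x = ln (cavity_sum lam e i x) + (node_lse lam i - edge_lse lam e)"
proof -
  let ?A = "\<Sum>x\<in>X. exp (node_pot lam i x)"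
  let ?B = "\<Sum>xe\<in>PiE e (\<lambda>_. X). exp (edge_pot lam e xe)"
  have "exp (node_pot lam i x) * ?B = (exp (- \<eta> * lam e i x) * cavity_sum lam e i x) * ?A"
    using minimizer_marginals_eq[OF min e i x] sum_slice_edge_pot[OF e i] by simp
  hence "ln (exp (node_pot lam i x) * ?B) = ln ((exp (- \<eta> * lam e i x) * cavity_sum lam e i x) * ?A)"
    by simp
  hence "node_pot lam i x + ln ?B = - \<eta> * lam e i x + ln (cavity_sum lam e i x) + ln ?A"
    using node_sum_exp_pos[of "node_pot lam i"] edge_sum_exp_pos[OF e, of "edge_pot lam e"]
      cavity_sum_pos[OF e i x] by (simp add: ln_mult_pos)
  thus ?thesis unfolding node_lse_def edge_lse_def by simp
qed

text \<open>Subtracting \<open>minimizer_balance\<close> at \<open>x'\<close> from it at \<open>x\<close>, for all edges \<open>f \<ni> i\<close>, gives the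
  system of \<open>coupled_system_component_le\<close>.\<close>
lemma minimizer_oscillation:
  assumes min: "\<And>lam'. L lam \<le> L lam'" and e: "e \<in> E" and i: "i \<in> e" and x: "x \<in> X" and x': "x' \<in> X"
  shows "lam e i x - lam e i x' \<le> 4 * C"
proof -
  have iV: "i \<in> V" using edge_props(3)[OF e] i by auto
  have "\<eta> * (lam e i x - lam e i x') \<le> 2 * (2 * \<eta> * C)"
  proof (rule coupled_system_component_le[where w = "\<lambda>f. \<eta> * (lam f i x - lam f i x')"
        and u = "\<lambda>f. ln (cavity_sum lam f i x) - ln (cavity_sum lam f i x')"
        and a = "\<eta> * (Cv i x - Cv i x')"])
    show "finite (nbhd E i)" "e \<in> nbhd E i" using finite_E e i by (auto simp: nbhd_def)
    fix f assume "f \<in> nbhd E i"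
    hence f: "f \<in> E" "i \<in> f" by (auto simp: nbhd_def)
    have "(\<Sum>g\<in>nbhd E i. \<eta> * (lam g i x - lam g i x'))
        = \<eta> * (\<Sum>g\<in>nbhd E i. lam g i x) - \<eta> * (\<Sum>g\<in>nbhd E i. lam g i x')"
      by (simp add: sum_distrib_left[symmetric] sum_subtractf right_diff_distrib)
    then show "\<eta> * (lam f i x - lam f i x') + (\<Sum>g\<in>nbhd E i. \<eta> * (lam g i x - lam g i x'))
        - \<eta> * (Cv i x - Cv i x') = ln (cavity_sum lam f i x) - ln (cavity_sum lam f i x')"
      using minimizer_balance[OF min f x] minimizer_balance[OF min f x']
      unfolding node_pot_def by (simp add: right_diff_distrib)
    show "\<bar>ln (cavity_sum lam f i x) - ln (cavity_sum lam f i x')\<bar> \<le> 2 * \<eta> * C"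
      using ln_cavity_sum_diff_le[OF f x x'] ln_cavity_sum_diff_le[OF f x' x] by (simp add: abs_le_iff)
  next
    show "\<bar>\<eta> * (Cv i x - Cv i x')\<bar> \<le> 2 * \<eta> * C"
      using scaled_Cv_le[OF iV x] scaled_Cv_ge[OF iV x] scaled_Cv_le[OF iV x'] scaled_Cv_ge[OF iV x']
      by (simp add: abs_le_iff algebra_simps)
  qed
  thus ?thesis using eta_pos by simp
qed

lemma exists_bounded_minimizer:
  obtains lam xr where "\<And>lam'. L lam \<le> L lam'" and "xr \<in> X"
    and "\<And>e i. e \<in> E \<Longrightarrow> i \<in> e \<Longrightarrow> lam e i xr = 0"
    and "\<And>e i x. e \<in> E \<Longrightarrow> i \<in> e \<Longrightarrow> x \<in> X \<Longrightarrow> \<bar>lam e i x\<bar> \<le> 4 * C"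
proof -
  obtain lam0 where min0: "\<And>lam. L lam0 \<le> L lam" using exists_minimizer by blast
  obtain xr where xr: "xr \<in> X" using X_nonempty by auto
  define lam where "lam = (\<lambda>e i x. lam0 e i x - lam0 e i xr)"
  have "L lam = L lam0" unfolding lam_def by (rule L_shift_invariant)
  show ?thesis
  proof (rule that)
    show "L lam \<le> L lam'" for lam' using min0 \<open>L lam = L lam0\<close> by simp
    show "xr \<in> X" by (rule xr)
    show "lam e i xr = 0" for e i by (simp add: lam_def)
    show "\<bar>lam e i x\<bar> \<le> 4 * C" if "e \<in> E" "i \<in> e" "x \<in> X" for e i x
      using minimizer_oscillation[OF min0 that xr] minimizer_oscillation[OF min0 that(1,2) xr that(3)]
      unfolding lam_def by auto
  qed
qed

lemma dual_norm2_sq_le: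
  assumes "\<And>e i x. e \<in> E \<Longrightarrow> i \<in> e \<Longrightarrow> x \<in> X \<Longrightarrow> \<bar>lam e i x\<bar> \<le> b"
  shows "dual_norm2_sq E X lam \<le> 2 * real (card E) * real (card X) * b\<^sup>2"
proof -
  have "dual_norm2_sq E X lam \<le> (\<Sum>e\<in>E. \<Sum>i\<in>e. \<Sum>x\<in>X. b\<^sup>2)"
    unfolding dual_norm2_sq_def
  proof (intro sum_mono)
    fix e i x assume "e \<in> E" "i \<in> e" "x \<in> X"
    hence "\<bar>lam e i x\<bar> \<le> b" by (rule assms)
    from power_mono[OF this abs_ge_zero, of 2] show "(lam e i x)\<^sup>2 \<le> b\<^sup>2" by simp
  qed
  also have "\<dots> = (\<Sum>e\<in>E. 2 * (real (card X) * b\<^sup>2))"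
    by (intro sum.cong) (use edge_props in auto)
  also have "\<dots> = 2 * real (card E) * real (card X) * b\<^sup>2" by simp
  finally show ?thesis .
qed

theorem minimizer_gap_bound:
  "\<exists>lam_star. (\<forall>lam. L lam_star \<le> L lam) \<and>
     4 * L (\<lambda>_ _ _. 0) - 4 * L lam_star + 16 * (real (card E))\<^sup>2 * \<eta> * dual_norm2_sq E X lam_star
     \<le> (24 * real (card E) * real (card X) * (real (card E) + real (card V))
          * (sqrt \<eta> * C + ln (real (card X)) / sqrt \<eta>))\<^sup>2"
proof -
  obtain ls xr where min: "\<And>lam. L ls \<le> L lam" and xr: "xr \<in> X"
    and zero: "\<And>e i. e \<in> E \<Longrightarrow> i \<in> e \<Longrightarrow> ls e i xr = 0"
    and bounded: "\<And>e i x. e \<in> E \<Longrightarrow> i \<in> e \<Longrightarrow> x \<in> X \<Longrightarrow> \<bar>ls e i x\<bar> \<le> 4 * C"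
    by (rule exists_bounded_minimizer) (rule that)
  have norm: "dual_norm2_sq E X ls \<le> 32 * real (card E) * real (card X) * C\<^sup>2"
    using dual_norm2_sq_le[of ls "4 * C", OF bounded] by (simp add: power_mult_distrib)
  have gap: "4 * L (\<lambda>_ _ _. 0) - 4 * L ls + 16 * (real (card E))\<^sup>2 * \<eta> * dual_norm2_sq E X ls
     \<le> (24 * real (card E) * real (card X) * (real (card E) + real (card V))
          * (sqrt \<eta> * C + ln (real (card X)) / sqrt \<eta>))\<^sup>2"
  proof (cases "E = {}")
    case True
    then have "V = {}" using cover by auto
    with True show ?thesis by (simp add: dualL_def dual_norm2_sq_def)
  next
    case False
    have m: "1 \<le> real (card E)" using False finite_E by (simp add: Suc_le_eq card_gt_0_iff)
    have "ln 2 \<le> ln (real (card X))" using card_X by simp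
    hence ld: "1/2 \<le> ln (real (card X))" using ln2_ge_two_thirds by linarith
    have P: "L (\<lambda>_ _ _. 0) - L ls \<le> 2 * (real (card V) + real (card E)) * C
        + (real (card V) + 2 * real (card E)) * ln (real (card X)) / \<eta>"
      using L_zero_le L_ge_of_vanishing_label[of xr ls, OF xr zero] by (simp add: algebra_simps)
    have "4 * (L (\<lambda>_ _ _. 0) - L ls) + 16 * (real (card E))\<^sup>2 * \<eta> * dual_norm2_sq E X ls
       \<le> (24 * real (card E) * real (card X) * (real (card E) + real (card V))
            * (sqrt \<eta> * C + ln (real (card X)) / sqrt \<eta>))\<^sup>2"
      by (rule gap_bound_arith[OF m _ _ cost_sup_bounds(1) eta_pos ld P norm]) (use card_X in auto)
    thus ?thesis by (simp only: right_diff_distrib)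
  qed
  show ?thesis using min gap by blast
qed

end

theorem lemma7:
  fixes V :: "'v set" and E :: "'v set set" and X :: "'x set"
    and Cv :: "'v \<Rightarrow> 'x \<Rightarrow> real" and Ce :: "'v set \<Rightarrow> ('v \<Rightarrow> 'x) \<Rightarrow> real"
    and \<eta> :: real
  assumes finV: "finite V"
    and edges: "\<forall>e\<in>E. \<exists>i j. i \<in> V \<and> j \<in> V \<and> i \<noteq> j \<and> e = {i, j}"
    and cover: "\<forall>i\<in>V. \<exists>e\<in>E. i \<in> e"
    and finX: "finite X"
    and d2: "card X \<ge> 2"
    and eta: "\<eta> > 0"
  shows "\<exists>lam_star. (\<forall>lam. dualL \<eta> V E X Cv Ce lam_star \<le> dualL \<eta> V E X Cv Ce lam) \<and>
     4 * dualL \<eta> V E X Cv Ce (\<lambda>_ _ _. 0) - 4 * dualL \<eta> V E X Cv Ce lam_star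
       + 16 * (real (card E))\<^sup>2 * \<eta> * dual_norm2_sq E X lam_star
     \<le> (24 * real (card E) * real (card X) * (real (card E) + real (card V))
          * (sqrt \<eta> * cost_sup V E X Cv Ce + ln (real (card X)) / sqrt \<eta>))\<^sup>2"
proof -
  interpret pairwise_dual V E X Cv Ce \<eta>
    using finV edges cover finX d2 eta by unfold_locales
  show ?thesis by (rule minimizer_gap_bound)
qed

end
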